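(* If $\mathsf{A}=(A_1,\dots,A_N)\in GL_2(\mathbb{R})^N$ is dominated and irreducible, then $\mathsf{A}$ is strongly irreducible.
   Context: For a finite word $\mathtt{i}=i_1\cdots i_n$, $A_{\mathtt{i}}=A_{i_1}\cdots A_{i_n}$ and $|\mathtt{i}|=n$; $\Sigma_*$ is the set of finite words. $\alpha_1\ge\alpha_2$ are singular values. Dominated: there are $C>0$, $0<\tau<1$ with $\alpha_2(A_{\mathtt{i}})\le C\tau^{|\mathtt{i}|}\alpha_1(A_{\mathtt{i}})$ for all $\mathtt{i}\in\Sigma_*$. Irreducible: no line $V$ through the origin has $A_iV=V$ for all $i$. Strongly irreducible: no finite nonempty set $\mathcal{V}$ of lines through the origin satisfies $A_i\mathcal{V}=\mathcal{V}$ for all $i$. *)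

theory Defs
  imports "HOL-Analysis.Analysis"
begin

text \<open>A tuple (A_1,...,A_N) is modelled as A :: nat => real^2^2 restricted to indices i < N.
  Finite words are lists over {..<N}; the product A_w = A_{w1} ... A_{wn}.\<close>

definition word_prod :: "(nat \<Rightarrow> real^2^2) \<Rightarrow> nat list \<Rightarrow> real^2^2" where
  "word_prod A w = foldr (\<lambda>i M. A i ** M) w (mat 1)"

definition sv1 :: "real^2^2 \<Rightarrow> real" where
  "sv1 M = Sup ((\<lambda>x. norm (M *v x)) ` {x. norm x = 1})"

definition sv2 :: "real^2^2 \<Rightarrow> real" where
  "sv2 M = Inf ((\<lambda>x. norm (M *v x)) ` {x. norm x = 1})"

definition dominated :: "nat \<Rightarrow> (nat \<Rightarrow> real^2^2) \<Rightarrow> bool" where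
  "dominated N A \<longleftrightarrow> (\<exists>C::real. \<exists>\<tau>::real. C > 0 \<and> 0 < \<tau> \<and> \<tau> < 1 \<and>
     (\<forall>w. set w \<subseteq> {..<N} \<longrightarrow>
        sv2 (word_prod A w) \<le> C * \<tau> ^ length w * sv1 (word_prod A w)))"

definition is_line :: "(real^2) set \<Rightarrow> bool" where
  "is_line V \<longleftrightarrow> subspace V \<and> dim V = 1"

definition irreducible_tuple :: "nat \<Rightarrow> (nat \<Rightarrow> real^2^2) \<Rightarrow> bool" where
  "irreducible_tuple N A \<longleftrightarrow>
     \<not> (\<exists>V. is_line V \<and> (\<forall>i<N. (\<lambda>x. A i *v x) ` V = V))"

definition strongly_irreducible_tuple :: "nat \<Rightarrow> (nat \<Rightarrow> real^2^2) \<Rightarrow> bool" where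
  "strongly_irreducible_tuple N A \<longleftrightarrow>
     \<not> (\<exists>\<V>. finite \<V> \<and> \<V> \<noteq> {} \<and> (\<forall>V\<in>\<V>. is_line V) \<and>
          (\<forall>i<N. (\<lambda>V. (\<lambda>x. A i *v x) ` V) ` \<V> = \<V>))"

end

theory Submission
  imports Defs
begin

text \<open>Suppose a finite nonempty set of lines is permuted by every A_i. Irreducibility gives a
  line L in it and a generator A_j with A_j L \<noteq> L. As A_j permutes the finite set, some power
  M = A_j^d (d \<ge> 1) fixes L and hence also A_j L; so M has two independent eigenvectors and,
  since they share the eigenvalue c (the second is A_j times the first and M commutes with A_j),
  M = c I with c \<noteq> 0. Then every power M^n has two equal singular values, whereas domination
  forces their ratio to decay exponentially in n.\<close>

lemma periodic_point_of_finite_surj: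
  assumes "finite S" "f ` S = S" "x \<in> S"
  obtains d where "d > 0" "(f ^^ d) x = x"
proof -
  have inj: "inj_on f S"
    using finite_surj_inj[OF assms(1)] assms(2) by blast
  have orbit_in_S: "(f ^^ n) x \<in> S" for n
  proof (induction n)
    case (Suc n)
    then have "f ((f ^^ n) x) \<in> f ` S"
      by (rule imageI)
    then show ?case
      using assms(2) by simp
  qed (use assms(3) in simp)
  have "finite (range (\<lambda>n. (f ^^ n) x))"
    using orbit_in_S by (auto intro: finite_subset[OF _ assms(1)])
  then have "\<not> inj (\<lambda>n. (f ^^ n) x)"
    using finite_imageD infinite_UNIV_nat by blast
  then obtain p q where "p < q" "(f ^^ p) x = (f ^^ q) x"
    unfolding inj_def by (metis nat_neq_iff)
  moreover have "(f ^^ p) x = (f ^^ (p + k)) x \<Longrightarrow> x = (f ^^ k) x" for p k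
  proof (induction p)
    case (Suc p)
    have "f ((f ^^ p) x) = f ((f ^^ (p + k)) x)"
      using Suc.prems by simp
    then show ?case
      using Suc.IH inj_onD[OF inj _ orbit_in_S orbit_in_S] by blast
  qed simp
  ultimately have "(f ^^ (q - p)) x = x"
    by (metis le_add_diff_inverse less_imp_le)
  then show thesis
    using that[of "q - p"] \<open>p < q\<close> by simp
qed

lemma is_line_span_singleton:
  assumes "is_line V"
  obtains v where "v \<noteq> 0" "V = span {v}"
proof -
  obtain B where B: "B \<subseteq> V" "independent B" "V \<subseteq> span B" "card B = 1"
    using basis_exists[of V] assms unfolding is_line_def by metis
  then obtain v where "B = {v}"
    using card_1_singletonE by metis
  then show thesis
    using that B assms span_subspace[of B V] unfolding is_line_def
    by (metis dependent_zero insertI1)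
qed

lemma invertible_mult_vec_eq_0_iff:
  fixes M :: "'a::field^'n^'n"
  assumes "invertible M"
  shows "M *v v = 0 \<longleftrightarrow> v = 0"
  using assms by (metis invertible_left_inverse matrix_left_invertible_ker matrix_vector_mult_0_right)

lemma span_singleton_scaleR:
  fixes v :: "'a::real_vector"
  assumes "a \<noteq> 0"
  shows "span {a *\<^sub>R v} = span {v}"
proof -
  have "v = inverse a *\<^sub>R (a *\<^sub>R v)"
    using assms by simp
  then show ?thesis
    unfolding span_eq by (metis insert_subset empty_subsetI span_base span_mul singletonI)
qed

lemma invertible_image_span_singleton:
  fixes M :: "real^'n^'n"
  assumes "invertible M" "M *v v \<in> span {v}"
  shows "(\<lambda>x. M *v x) ` span {v} = span {v}"
proof -
  obtain a where a: "M *v v = a *\<^sub>R v"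
    using assms(2) by (auto simp: span_singleton)
  have "span {M *v v} = span {v}"
  proof (cases "v = 0")
    case False
    then have "a \<noteq> 0"
      using a invertible_mult_vec_eq_0_iff[OF assms(1), of v] by auto
    then show ?thesis
      using a span_singleton_scaleR by simp
  qed simp
  moreover have "(\<lambda>x. M *v x) ` span {v} = span {M *v v}"
    using span_linear_image[OF matrix_vector_mul_linear, of M "{v}"] by simp
  ultimately show ?thesis
    by simp
qed

lemma scalar_action_of_two_eigenvectors:
  fixes M :: "real^2^2"
  assumes "independent {u, v}" "u \<noteq> v"
    and "M *v u = c *\<^sub>R u" "M *v v = c *\<^sub>R v"
  shows "M *v x = c *\<^sub>R x"
proof -
  let ?E = "{x. M *v x = c *\<^sub>R x}"
  have "subspace ?E"
    by (auto simp: subspace_def matrix_vector_right_distrib matrix_vector_mult_scaleR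
        scaleR_add_right)
  then have "span {u, v} \<subseteq> ?E"
    using assms(3,4) by (intro span_minimal) auto
  moreover have "x \<in> span {u, v}"
    using card_ge_dim_independent[of "{u, v}" UNIV] assms(1,2) by auto
  ultimately show ?thesis
    by blast
qed

lemma commuting_eigenvector_scalar:
  fixes M B :: "real^2^2"
  assumes "M ** B = B ** M" "M *v v = c *\<^sub>R v" "v \<noteq> 0" "B *v v \<notin> span {v}"
  shows "M *v x = c *\<^sub>R x"
proof (rule scalar_action_of_two_eigenvectors)
  show "independent {B *v v, v}" "B *v v \<noteq> v"
    using assms(3,4) by (auto simp: independent_insert span_base)
  show "M *v (B *v v) = c *\<^sub>R (B *v v)"
    using assms(1,2) by (metis matrix_vector_mul_assoc matrix_vector_mult_scaleR)
qed fact

lemma word_prod_Nil [simp]: "word_prod A [] = mat 1"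
  by (simp add: word_prod_def)

lemma word_prod_Cons [simp]: "word_prod A (i # w) = A i ** word_prod A w"
  by (simp add: word_prod_def)

lemma word_prod_append: "word_prod A (w @ w') = word_prod A w ** word_prod A w'"
  by (induction w) (simp_all add: matrix_mul_assoc)

lemma invertible_word_prod:
  assumes "\<forall>i<N. invertible (A i)" "set w \<subseteq> {..<N}"
  shows "invertible (word_prod A w)"
  using assms(2)
proof (induction w)
  case Nil
  then show ?case
    by (simp add: invertible_def)
next
  case (Cons i w)
  then show ?case
    using assms(1) by (simp add: invertible_mult)
qed

lemma word_prod_replicate_commute:
  "word_prod A (replicate k j) ** A j = A j ** word_prod A (replicate k j)"
proof -
  have "word_prod A (replicate k j @ [j]) = word_prod A (j # replicate k j)"
    by (simp add: replicate_append_same)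
  then show ?thesis
    by (simp add: word_prod_append)
qed

lemma word_prod_replicate_image:
  "(\<lambda>x. word_prod A (replicate k j) *v x) ` V = ((\<lambda>V. (\<lambda>x. A j *v x) ` V) ^^ k) V"
proof (induction k)
  case (Suc k)
  have "(\<lambda>x. word_prod A (replicate (Suc k) j) *v x) ` V
      = (\<lambda>x. A j *v x) ` (\<lambda>x. word_prod A (replicate k j) *v x) ` V"
    by (simp add: image_image matrix_vector_mul_assoc[symmetric])
  then show ?case
    using Suc.IH by simp
qed simp


lemma word_prod_power_scalar:
  assumes "\<And>x. word_prod A w *v x = c *\<^sub>R x"
  shows "word_prod A (concat (replicate n w)) *v x = c ^ n *\<^sub>R x"
  by (induction n arbitrary: x) (simp_all add: word_prod_append assms
      matrix_vector_mul_assoc[symmetric])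

lemma singular_values_scalar:
  assumes "\<And>x. M *v x = c *\<^sub>R x"
  shows "sv1 M = \<bar>c\<bar>" "sv2 M = \<bar>c\<bar>"
proof -
  have "(\<lambda>x. norm (M *v x)) ` {x::real^2. norm x = 1} = {\<bar>c\<bar>}"
    using vector_choose_size[of 1] by (auto simp: assms)
  then show "sv1 M = \<bar>c\<bar>" "sv2 M = \<bar>c\<bar>"
    by (simp_all add: sv1_def sv2_def)
qed

lemma dominated_no_scalar_word:
  assumes "dominated N A" "set w \<subseteq> {..<N}" "w \<noteq> []"
    and "\<And>x. word_prod A w *v x = c *\<^sub>R x"
  shows "c = 0"
proof (rule ccontr)
  assume "c \<noteq> 0"
  obtain C \<tau> where C: "C > 0" "0 < \<tau>" "\<tau> < 1" and dom:
    "\<And>w. set w \<subseteq> {..<N} \<Longrightarrow> sv2 (word_prod A w) \<le> C * \<tau> ^ length w * sv1 (word_prod A w)"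
    using assms(1) unfolding dominated_def by blast
  obtain n where n: "\<tau> ^ n < 1 / C"
    using real_arch_pow_inv[of "1 / C" \<tau>] C by auto
  have "set (concat (replicate n w)) \<subseteq> {..<N}"
    using assms(2) by auto
  then have "\<bar>c ^ n\<bar> \<le> C * \<tau> ^ (n * length w) * \<bar>c ^ n\<bar>"
    using dom[of "concat (replicate n w)"]
      singular_values_scalar[OF word_prod_power_scalar[OF assms(4)]]
    by (simp add: length_concat sum_list_replicate)
  then have "1 \<le> C * \<tau> ^ (n * length w)"
    using \<open>c \<noteq> 0\<close> by simp
  also have "\<dots> \<le> C * \<tau> ^ n"
    using C assms(3) by (intro mult_left_mono power_decreasing) (auto simp: Suc_le_eq)
  finally show False
    using n C by (simp add: field_simps)
qed

theorem mainTheorem10: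
  fixes N :: nat and A :: "nat \<Rightarrow> real^2^2"
  assumes "\<forall>i<N. invertible (A i)"
    and "dominated N A"
    and "irreducible_tuple N A"
  shows "strongly_irreducible_tuple N A"
  unfolding strongly_irreducible_tuple_def
proof
  assume "\<exists>\<V>. finite \<V> \<and> \<V> \<noteq> {} \<and> (\<forall>V\<in>\<V>. is_line V) \<and>
          (\<forall>i<N. (\<lambda>V. (\<lambda>x. A i *v x) ` V) ` \<V> = \<V>)"
  then obtain \<V> L where fin: "finite \<V>" and "L \<in> \<V>" "is_line L"
    and permuted: "\<forall>i<N. (\<lambda>V. (\<lambda>x. A i *v x) ` V) ` \<V> = \<V>"
    by blast
  obtain v where "v \<noteq> 0" and L: "L = span {v}"
    using is_line_span_singleton[OF \<open>is_line L\<close>] .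
  obtain j where j: "j < N" "(\<lambda>x. A j *v x) ` L \<noteq> L"
    using assms(3) \<open>is_line L\<close> unfolding irreducible_tuple_def by blast
  obtain d where "d > 0" "((\<lambda>V. (\<lambda>x. A j *v x) ` V) ^^ d) L = L"
    using periodic_point_of_finite_surj[OF fin _ \<open>L \<in> \<V>\<close>] permuted j(1) by blast
  define M where "M = word_prod A (replicate d j)"
  have "(\<lambda>x. M *v x) ` L = L"
    unfolding M_def word_prod_replicate_image by fact
  then have "M *v v \<in> span {v}"
    using L by (metis imageI singletonI span_base)
  then obtain c where Mv: "M *v v = c *\<^sub>R v"
    by (auto simp: span_singleton)
  have "A j *v v \<notin> span {v}"
    using invertible_image_span_singleton assms(1) j L by blast
  then have "M *v x = c *\<^sub>R x" for x
    using commuting_eigenvector_scalar[OF word_prod_replicate_commute Mv[unfolded M_def] \<open>v \<noteq> 0\<close>]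
    by (simp add: M_def)
  then have "c = 0"
    using j(1) \<open>d > 0\<close>
    by (intro dominated_no_scalar_word[OF assms(2), of "replicate d j"]) (auto simp: M_def)
  moreover have "invertible M"
    unfolding M_def using j(1) by (intro invertible_word_prod[OF assms(1)]) auto
  ultimately show False
    using Mv \<open>v \<noteq> 0\<close> by (simp add: invertible_mult_vec_eq_0_iff)
qed

end
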